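(* Let $N,n,i,\mathcal V,N_i,\delta,\lambda\in(0,1),\tilde W,p$ be as in the context. Fix $\ell,b\in\{0,1\}^N$ and $r\in\mathbb R^n$. Let $e\in\mathbb R^{Nn}$, $y\in\mathbb R^n$, $w\in\mathbb R^n$ and constants $H\ge0$, $L\ge0$ satisfy $$|w|\le H+L\,|e^i|,$$ where $e^i$ is the $i$-th block of $e$, and set $g:=(-\delta(1)w,-\delta(2)w,\dots,-\delta(N)w)\in\mathbb R^{Nn}$. If the map $(e',y')\mapsto\tilde W(\ell,b,y',e',r)$ is differentiable at $(e,y)$, then $$\Big\langle \frac{\partial \tilde W(\ell,b,y,e,r)}{\partial(e,y)},\,(g,w)\Big\rangle\le \sqrt{N_i}\,H+\tilde L(p(\ell,b))\,\tilde W(\ell,b,y,e,r),$$ where $\tilde L(l):=\lambda^{-l}\sqrt{N_i}\,L$ for $l\in\{0,1\}$.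
   Context: Fix integers $N\ge1$, $n\ge1$, an index $i\in\{1,\dots,N\}$ and a set $\mathcal V\subseteq\{1,\dots,N\}$ with cardinality $N_i:=|\mathcal V|$. For $m\in\{1,\dots,N\}$ let $\delta(m)=1$ if $m\in\mathcal V$ and $\delta(m)=0$ otherwise. $\mathbf 1_N$ is the all-ones vector in $\mathbb R^N$. $\Gamma_m$ is the $N\times N$ matrix whose $(m,m)$ entry is $1$ and all others $0$, and $Y_m:=\Gamma_m\otimes I_n$. Vectors $e\in\mathbb R^{Nn}$ are written in blocks $e=(e^1,\dots,e^N)$, $e^m\in\mathbb R^n$. $|\cdot|$ is the Euclidean norm. For $\ell,b\in\{0,1\}^N$ define $\mathcal R(\ell,b):=\{m\in\mathcal V:\ell^m=1\text{ or }b^m=1\}$, $p(\ell,b):=0$ if $\mathcal R(\ell,b)=\emptyset$ and $p(\ell,b):=1$ otherwise, and for $y,r\in\mathbb R^n$, $e\in\mathbb R^{Nn}$, $$s(\ell,b,y,e,r):=\sum_{l\in\mathcal R(\ell,b)}Y_l\big(\mathbf 1_N\otimes(r-y)-e\big),\qquad \tilde W(\ell,b,y,e,r):=\max\Big\{|e+s(\ell,b,y,e,r)|,\;\lambda\max_{R\subseteq\mathcal R(\ell,b)}\Big|e+\sum_{l\in R}Y_l\,s(\ell,b,y,e,r)\Big|\Big\},$$ the inner maximum being over all subsets $R$ of $\mathcal R(\ell,b)$ including $\emptyset$. *)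

theory Defs
  imports "HOL-Analysis.Analysis"
begin

text \<open>Block vectors in R^(N n) are modelled as elements of real^'n^'N:
  the component e $ m is the m-th block e^m in R^n.  The Euclidean norm of
  real^'n^'N coincides with the Euclidean norm on R^(N n).\<close>

text \<open>Y_m = Gamma_m (x) I_n : keeps block m, zeroes the others.\<close>
definition Ymat :: "'N::finite \<Rightarrow> real^'n^'N \<Rightarrow> real^'n^'N" where
  "Ymat m x = (\<chi> k. if k = m then x $ k else 0)"

text \<open>1_N (x) v : the block vector with every block equal to v.\<close>
definition onesk :: "real^'n \<Rightarrow> real^'n^'N::finite" where
  "onesk v = (\<chi> k. v)"

definition delta :: "'N set \<Rightarrow> 'N \<Rightarrow> real" where
  "delta V m = (if m \<in> V then 1 else 0)"

text \<open>R(l,b) = {m in V. l^m = 1 or b^m = 1}; l,b in {0,1}^N encoded as boolean functions.\<close>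
definition Rset :: "'N set \<Rightarrow> ('N \<Rightarrow> bool) \<Rightarrow> ('N \<Rightarrow> bool) \<Rightarrow> 'N set" where
  "Rset V l b = {m \<in> V. l m \<or> b m}"

definition pfun :: "'N set \<Rightarrow> ('N \<Rightarrow> bool) \<Rightarrow> ('N \<Rightarrow> bool) \<Rightarrow> nat" where
  "pfun V l b = (if Rset V l b = {} then 0 else 1)"

definition sfun :: "'N::finite set \<Rightarrow> ('N \<Rightarrow> bool) \<Rightarrow> ('N \<Rightarrow> bool) \<Rightarrow> real^'n \<Rightarrow> real^'n^'N \<Rightarrow> real^'n \<Rightarrow> real^'n^'N" where
  "sfun V l b y e r = (\<Sum>m\<in>Rset V l b. Ymat m (onesk (r - y) - e))"

definition Wt :: "real \<Rightarrow> 'N::finite set \<Rightarrow> ('N \<Rightarrow> bool) \<Rightarrow> ('N \<Rightarrow> bool) \<Rightarrow> real^'n \<Rightarrow> real^'n^'N \<Rightarrow> real^'n \<Rightarrow> real" where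
  "Wt lam V l b y e r =
     max (norm (e + sfun V l b y e r))
         (lam * Max ((\<lambda>R. norm (e + (\<Sum>m\<in>R. Ymat m (sfun V l b y e r)))) ` Pow (Rset V l b)))"

end

theory Submission
  imports Defs
begin

text \<open>Moving along the direction (g, w) translates y by w and every block e^m with m in V by -w,
  so r - y - e^m, and hence s, does not change; only the term e outside s moves, by |g| = sqrt(N_i) |w|
  per unit time, and W is 1-Lipschitz in that term because lam \<le> 1. Hence the directional derivative
  is at most sqrt(N_i) |w| \<le> sqrt(N_i) (H + L |e^i|). Finally W \<ge> lam^p |e|: for p = 0 the
  first entry of the maximum is |e|, for p = 1 the subset R = {} contributes lam |e|.\<close>

lemma DERIV_le_of_right_bound:
  fixes f :: "real \<Rightarrow> real"
  assumes "DERIV f x :> d" and "\<And>t. t > 0 \<Longrightarrow> f (x + t) \<le> f x + t * c"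
  shows "d \<le> c"
proof -
  have "((\<lambda>t. (f (x + t) - f x) / t) \<longlongrightarrow> d) (at_right 0)"
    using assms(1) unfolding DERIV_def by (rule filterlim_mono) (auto simp: at_within_le_at)
  moreover have "\<forall>\<^sub>F t in at_right 0. (f (x + t) - f x) / t \<le> c"
  proof (rule eventually_mono[OF eventually_at_right_less])
    fix t :: real
    assume "0 < t"
    with assms(2)[OF this] show "(f (x + t) - f x) / t \<le> c"
      by (simp add: pos_divide_le_eq mult.commute)
  qed
  ultimately show ?thesis
    by (rule tendsto_upperbound) simp
qed

lemma has_derivative_along_line:
  fixes F :: "'a::real_normed_vector \<Rightarrow> real"
  assumes "(F has_derivative D) (at z)"
  shows "((\<lambda>t. F (z + t *\<^sub>R v)) has_real_derivative D v) (at 0)"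
proof -
  have "((\<lambda>t. z + t *\<^sub>R v) has_derivative (\<lambda>t. t *\<^sub>R v)) (at 0)"
    by (auto intro!: derivative_eq_intros)
  from diff_chain_at[OF this] assms
  have "((\<lambda>t. F (z + t *\<^sub>R v)) has_derivative (\<lambda>t. D (t *\<^sub>R v))) (at 0)"
    by (simp add: o_def)
  moreover have "(\<lambda>t. D (t *\<^sub>R v)) = (*) (D v)"
    using linear_cmul[OF has_derivative_linear[OF assms]] by (auto simp: fun_eq_iff)
  ultimately show ?thesis
    by (simp add: has_field_derivative_def)
qed

lemma sfun_translate:
  "sfun V l b (y + u) (e + (\<chi> m. - (delta V m *\<^sub>R u))) r = sfun V l b y e r"
  unfolding sfun_def Rset_def
  by (rule sum.cong) (auto simp: Ymat_def onesk_def delta_def vec_eq_iff algebra_simps)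

lemma norm_delta_block:
  "norm ((\<chi> m. - (delta V m *\<^sub>R w)) :: real^'n^'N::finite) = sqrt (real (card V)) * norm w"
proof -
  have "norm ((\<chi> m. - (delta V m *\<^sub>R w)) :: real^'n^'N)
        = sqrt (\<Sum>m\<in>UNIV. (norm (- (delta V m *\<^sub>R w)))\<^sup>2)"
    by (simp only: norm_vec_def L2_set_def vec_lambda_beta)
  also have "(\<Sum>m\<in>UNIV. (norm (- (delta V m *\<^sub>R w)))\<^sup>2) = (\<Sum>m\<in>V. (norm w)\<^sup>2)"
    by (rule sum.mono_neutral_cong_right) (auto simp: delta_def)
  finally show ?thesis
    by (simp add: real_sqrt_mult)
qed

lemma Wt_translate_le:
  fixes u y r :: "real^'n" and e :: "real^'n^'N::finite"
  assumes "0 \<le> lam" "lam \<le> 1"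
  shows "Wt lam V l b (y + u) (e + (\<chi> m. - (delta V m *\<^sub>R u))) r
         \<le> Wt lam V l b y e r + sqrt (real (card V)) * norm u"
proof -
  define d :: "real^'n^'N" where "d = (\<chi> m. - (delta V m *\<^sub>R u))"
  define s where "s = sfun V l b y e r"
  define f where "f = (\<lambda>x R. norm (x + (\<Sum>m\<in>R. Ymat m s)))"
  let ?P = "Pow (Rset V l b)"
  have Wt_eq: "Wt lam V l b y' x r = max (norm (x + s)) (lam * Max (f x ` ?P))"
    if "sfun V l b y' x r = s" for y' x
    using that by (simp add: Wt_def f_def)
  have f_le: "f (e + d) R \<le> f e R + norm d" for R
    using norm_triangle_ineq[of "e + (\<Sum>m\<in>R. Ymat m s)" d] by (simp add: f_def algebra_simps)
  have "Max (f (e + d) ` ?P) \<in> f (e + d) ` ?P"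
    by (rule Max_in) auto
  then obtain R where R: "R \<in> ?P" "Max (f (e + d) ` ?P) = f (e + d) R"
    by auto
  have "lam * Max (f (e + d) ` ?P) \<le> lam * (f e R + norm d)"
    using R f_le assms(1) by (simp add: mult_left_mono)
  also have "\<dots> \<le> lam * Max (f e ` ?P) + norm d"
  proof -
    have "f e R \<le> Max (f e ` ?P)"
      using R(1) by (intro Max_ge) auto
    then show ?thesis
      using mult_left_mono[of _ _ lam] mult_left_le_one_le[of "norm d" lam] assms
      by (simp add: distrib_left add_mono)
  qed
  finally have "lam * Max (f (e + d) ` ?P) \<le> lam * Max (f e ` ?P) + norm d" .
  with norm_triangle_ineq[of "e + s" d]
  have "max (norm (e + d + s)) (lam * Max (f (e + d) ` ?P))
        \<le> max (norm (e + s)) (lam * Max (f e ` ?P)) + norm d"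
    unfolding max_add_distrib_left by (intro max.mono) (simp_all add: algebra_simps)
  then show ?thesis
    using Wt_eq[of "y + u" "e + d"] Wt_eq[of y e] sfun_translate[of V l b y u e r]
    by (simp add: d_def s_def norm_delta_block)
qed

lemma Wt_ge_norm:
  assumes "0 \<le> lam"
  shows "lam ^ pfun V l b * norm e \<le> Wt lam V l b y e r"
proof (cases "Rset V l b = {}")
  case True
  then show ?thesis
    by (simp add: pfun_def Wt_def sfun_def)
next
  case False
  let ?f = "\<lambda>R. norm (e + (\<Sum>m\<in>R. Ymat m (sfun V l b y e r)))"
  have "norm e \<le> Max (?f ` Pow (Rset V l b))"
    by (rule Max_ge) (auto intro!: image_eqI[where x = "{}"])
  then have "lam * norm e \<le> lam * Max (?f ` Pow (Rset V l b))"
    using assms by (rule mult_left_mono)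
  with False show ?thesis
    by (simp add: pfun_def Wt_def)
qed

lemma norm_nth_le_Wt_div:
  assumes "0 < lam"
  shows "norm (e $ i) \<le> Wt lam V l b y e r / lam ^ pfun V l b"
proof -
  have "lam ^ pfun V l b * norm (e $ i) \<le> lam ^ pfun V l b * norm e"
    using assms by (simp add: mult_left_mono Finite_Cartesian_Product.norm_nth_le)
  also have "\<dots> \<le> Wt lam V l b y e r"
    using assms by (simp add: Wt_ge_norm)
  finally show ?thesis
    using assms by (simp add: pos_le_divide_eq mult.commute)
qed

theorem lemma2:
  fixes lam H L :: real
    and V :: "'N::finite set" and i :: 'N
    and l b :: "'N \<Rightarrow> bool"
    and r y w :: "real^'n"
    and e :: "real^'n^'N"
    and D :: "(real^'n^'N) \<times> (real^'n) \<Rightarrow> real"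
  assumes "0 < lam" "lam < 1"
    and "H \<ge> 0" "L \<ge> 0"
    and "norm w \<le> H + L * norm (e $ i)"
    and "((\<lambda>z. Wt lam V l b (snd z) (fst z) r) has_derivative D) (at (e, y))"
  shows "D ((\<chi> m. - (delta V m *\<^sub>R w)), w)
           \<le> sqrt (real (card V)) * H
             + (sqrt (real (card V)) * L / lam ^ pfun V l b) * Wt lam V l b y e r"
proof -
  define g :: "real^'n^'N" where "g = (\<chi> m. - (delta V m *\<^sub>R w))"
  define W where "W = Wt lam V l b y e r"
  define c where "c = sqrt (real (card V))"
  have along: "Wt lam V l b (y + t *\<^sub>R w) (e + t *\<^sub>R g) r \<le> W + t * (c * norm w)"
    if "0 < t" for t
  proof -
    have "(\<chi> m. - (delta V m *\<^sub>R (t *\<^sub>R w))) = t *\<^sub>R g"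
      by (simp add: g_def vec_eq_iff)
    then show ?thesis
      using Wt_translate_le[of lam V l b y "t *\<^sub>R w" e r] assms(1,2) that
      by (simp add: W_def c_def mult.left_commute)
  qed
  have "DERIV (\<lambda>t. Wt lam V l b (y + t *\<^sub>R w) (e + t *\<^sub>R g) r) 0 :> D (g, w)"
    using has_derivative_along_line[OF assms(6), of "(g, w)"] by simp
  then have "D (g, w) \<le> c * norm w"
    by (rule DERIV_le_of_right_bound) (use along in \<open>simp add: W_def\<close>)
  also have "\<dots> \<le> c * H + c * L * norm (e $ i)"
    using mult_left_mono[OF assms(5), of c] by (simp add: c_def algebra_simps)
  also have "\<dots> \<le> c * H + c * L * (W / lam ^ pfun V l b)"
    using norm_nth_le_Wt_div[OF assms(1), of e i V l b y r] assms(4)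
    by (intro add_left_mono mult_left_mono) (simp_all add: W_def c_def)
  finally show ?thesis
    by (simp add: g_def W_def c_def)
qed

end
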